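(* Let $\nu$ be a sub-Gaussian probability measure on $\mathbb{R}$ and $c_1,C>0$ constants such that a vector $X\in\mathbb{R}^d$ with i.i.d. entries from $\nu$ satisfies $\mathbb{P}(\|X\|\ge\sqrt d+t)\le Ce^{-c_1t^2}$ for $t\ge0$. Let $X_1,X_2,\dots$ be i.i.d. such vectors with law $\mu$, and $\mu_n=\frac1n\sum_{i=1}^n\delta_{X_i}$. Let $\delta>0$ with $c_1\delta^2>8$. Then almost surely \[ \sup_{\sigma\in[\delta,\sqrt n],\ i=1,\dots,n}\Big|\log\Big(\int f_\sigma(X_i,x')\,d\mu_n(x')\Big)-\log\Big(\int f_\sigma(X_i,x')\,d\mu(x')\Big)\Big|=O\big(n^{4/(c_1\delta^2)-1/2}\sqrt{\log n}\big). \]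
   Context: $f_\sigma(x,x')=\exp(-\|x-x'\|^2/2\sigma^2)$. *)

theory Defs
  imports "HOL-Probability.Probability"
begin

definition subgaussian :: "real measure \<Rightarrow> bool" where
  "subgaussian \<nu> \<longleftrightarrow>
     (\<exists>K>0. \<forall>t\<ge>0. measure \<nu> {x\<in>space \<nu>. \<bar>x\<bar> \<ge> t} \<le> 2 * exp (- (t^2) / K^2))"

definition iid_vec_law :: "real measure \<Rightarrow> (real ^ 'd) measure" where
  "iid_vec_law \<nu> = distr (PiM UNIV (\<lambda>_::'d. \<nu>)) borel (\<lambda>f. vec_lambda f)"

definition gauss_kernel :: "real \<Rightarrow> 'a::real_normed_vector \<Rightarrow> 'a \<Rightarrow> real" where
  "gauss_kernel \<sigma> x x' = exp (- ((norm (x - x'))\<^sup>2) / (2 * \<sigma>\<^sup>2))"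

end

theory Submission
  imports Defs "HOL-Real_Asymp.Real_Asymp"
begin

(* Write E and G for the empirical and the population kernel mean, so the quantity to bound is
  |ln E - ln G|.  Hoeffding's inequality, a union bound over polynomially many grid points (sigma, x)
  with mesh 1/n^2 in sigma and 1/n in x, and Borel-Cantelli give |E - G| <= sqrt (k ln n / n) on the
  grid for all large n, with k depending only on d; since for sigma >= delta the kernel changes by
  O(h) when x is moved by h <= 1 and by O(sigma h) when sigma is, this extends to all sigma in
  [delta, sqrt n] and all x of norm at most n at the cost of O(1/n).  Concentration of the norm and Borel-Cantelli give
  |X_i| <= sqrt d + sqrt (2 ln n / c1) for all i <= n eventually, and with
  f_sigma(x, y) >= exp (-|x|^2 / delta^2) exp (-|y|^2 / delta^2) this yields
  G >= c n^(-4 / (c1 delta^2)).  As c1 delta^2 > 8, the error sqrt (ln n / n) eventually drops below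
  a quarter of this lower bound, and |ln E - ln G| <= 2 |E - G| / G gives the rate. *)

lemma exp_neg_diff_le:
  fixes a b :: real
  assumes "0 \<le> a" "a \<le> b"
  shows "\<bar>exp (-a) - exp (-b)\<bar> \<le> (b - a) * exp (-a)"
proof -
  have "1 - (b - a) \<le> exp (-(b - a))" using exp_ge_add_one_self[of "-(b - a)"] by linarith
  hence "exp (-a) * (1 - (b - a)) \<le> exp (-a) * exp (-(b - a))" by (intro mult_left_mono) auto
  also have "\<dots> = exp (-b)" by (simp flip: exp_add)
  finally show ?thesis using assms by (simp add: algebra_simps)
qed

lemma mult_exp_neg_le_one: "(w::real) * exp (-w) \<le> 1"
proof -
  have "w \<le> exp w" using exp_ge_add_one_self[of w] by linarith
  then show ?thesis by (simp add: exp_minus field_simps)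
qed

lemma mult_exp_neg_half_square_le_one: "(v::real) * exp (-(v\<^sup>2) / 2) \<le> 1"
proof -
  have "v \<le> 1 + v\<^sup>2 / 2" using zero_le_power2[of "v - 1"] by (simp add: power2_diff)
  also have "\<dots> \<le> exp (v\<^sup>2 / 2)" using exp_ge_add_one_self by simp
  finally show ?thesis by (simp add: exp_minus field_simps)
qed

lemma abs_ln_diff_le:
  fixes A B :: real
  assumes "A > 0" "B > 0"
  shows "\<bar>ln A - ln B\<bar> \<le> \<bar>A - B\<bar> / min A B"
proof -
  have "ln A - ln B \<le> (A - B) / B" "ln B - ln A \<le> (B - A) / A"
    using ln_le_minus_one[of "A / B"] ln_le_minus_one[of "B / A"] assms
    by (simp_all add: ln_div diff_divide_distrib)
  then show ?thesis using assms by (cases "A \<le> B") (auto simp: abs_if)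
qed

lemma abs_ln_diff_le_of_close:
  fixes A B b e :: real
  assumes "0 < b" "b \<le> B" "\<bar>A - B\<bar> \<le> e" "2 * e \<le> b"
  shows "\<bar>ln A - ln B\<bar> \<le> 2 * e / b"
proof -
  have min: "b / 2 \<le> min A B" using assms by (auto simp: abs_le_iff)
  have "\<bar>ln A - ln B\<bar> \<le> \<bar>A - B\<bar> / min A B"
    using assms min by (intro abs_ln_diff_le) auto
  also have "\<dots> \<le> e / (b / 2)"
    using assms min by (intro frac_le) auto
  finally show ?thesis by (simp add: mult.commute)
qed

lemma sqrt_ln_div_powr_neg:
  fixes x a \<alpha> :: real
  assumes "x > 0"
  shows "sqrt (a * ln x / x) / x powr (-\<alpha>) = sqrt a * (x powr (\<alpha> - 1/2) * sqrt (ln x))"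
proof -
  define p where "p = x powr \<alpha>"
  have "sqrt (a * ln x / x) = sqrt a * sqrt (ln x) / sqrt x" by (simp add: real_sqrt_mult real_sqrt_divide)
  moreover have "x powr (\<alpha> - 1/2) = p / sqrt x" using assms by (simp add: p_def powr_diff powr_half_sqrt)
  moreover have "x powr (-\<alpha>) = 1 / p" by (simp add: p_def powr_minus divide_inverse)
  moreover have "p > 0" "sqrt x > 0" using assms by (simp_all add: p_def)
  ultimately show ?thesis by (simp only:) (simp add: field_simps)
qed

lemma eventually_all_le_mono:
  fixes f g :: "nat \<Rightarrow> real"
  assumes "mono g" "filterlim g at_top sequentially" "eventually (\<lambda>n. f n \<le> g n) sequentially"
  shows "eventually (\<lambda>n. \<forall>i\<le>n. f i \<le> g n) sequentially"
proof -
  obtain N where N: "\<And>n. n \<ge> N \<Longrightarrow> f n \<le> g n"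
    using assms(3) by (auto simp: eventually_sequentially)
  define B where "B = (\<Sum>i<N. \<bar>f i\<bar>)"
  have "eventually (\<lambda>n. B \<le> g n) sequentially"
    using assms(2) by (simp add: filterlim_at_top)
  then show ?thesis
  proof eventually_elim
    case (elim n)
    show ?case
    proof (intro allI impI)
      fix i assume "i \<le> n"
      show "f i \<le> g n"
      proof (cases "N \<le> i")
        case True
        then show ?thesis using N \<open>i \<le> n\<close> monoD[OF assms(1)] by (meson order_trans)
      next
        case False
        then have "f i \<le> B"
          unfolding B_def using member_le_sum[of i "{..<N}" "\<lambda>i. \<bar>f i\<bar>"] by auto
        then show ?thesis using elim by linarith
      qed
    qed
  qed
qed

section \<open>The Gaussian kernel and kernel means\<close>

lemma gauss_kernel_pos: "0 < gauss_kernel \<sigma> x y"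
  by (simp add: gauss_kernel_def)

lemma gauss_kernel_le_one: "gauss_kernel \<sigma> x y \<le> 1"
  by (simp add: gauss_kernel_def)

lemma borel_measurable_gauss_kernel [measurable]: "gauss_kernel \<sigma> x \<in> borel_measurable borel"
  unfolding gauss_kernel_def divide_inverse by (intro borel_measurable_continuous_onI continuous_intros)

lemma gauss_profile_shift_diff_le:
  fixes \<sigma> u u' h :: real
  assumes "\<sigma> > 0" "0 \<le> u" "u \<le> u'" "u' \<le> u + h"
  shows "\<bar>exp (-(u\<^sup>2) / (2*\<sigma>\<^sup>2)) - exp (-(u'\<^sup>2) / (2*\<sigma>\<^sup>2))\<bar> \<le> h / \<sigma> + h\<^sup>2 / (2*\<sigma>\<^sup>2)"
proof -
  define a where "a = u\<^sup>2 / (2*\<sigma>\<^sup>2)"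
  define b where "b = u'\<^sup>2 / (2*\<sigma>\<^sup>2)"
  have ab: "0 \<le> a" "a \<le> b"
    unfolding a_def b_def using assms by (auto intro!: divide_right_mono power_mono)
  have "b - a = (u' - u) * (u' + u) / (2*\<sigma>\<^sup>2)"
    by (simp add: a_def b_def diff_divide_distrib algebra_simps power2_eq_square)
  also have "\<dots> \<le> h * (2*u + h) / (2*\<sigma>\<^sup>2)"
    using assms by (intro divide_right_mono mult_mono) auto
  finally have ba: "b - a \<le> h * (2*u + h) / (2*\<sigma>\<^sup>2)" .
  have "\<bar>exp (-a) - exp (-b)\<bar> \<le> (b - a) * exp (-a)" by (rule exp_neg_diff_le[OF ab])
  also have "\<dots> \<le> h * (2*u + h) / (2*\<sigma>\<^sup>2) * exp (-a)"
    using ba by (intro mult_right_mono) auto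
  also have "\<dots> = h / \<sigma> * ((u/\<sigma>) * exp (-((u/\<sigma>)\<^sup>2) / 2)) + h\<^sup>2 / (2*\<sigma>\<^sup>2) * exp (-a)"
    using assms by (simp add: a_def field_simps power2_eq_square)
  also have "\<dots> \<le> h / \<sigma> * 1 + h\<^sup>2 / (2*\<sigma>\<^sup>2) * 1"
    using assms ab by (intro add_mono mult_left_mono mult_exp_neg_half_square_le_one) auto
  finally show ?thesis by (simp add: a_def b_def)
qed

lemma gauss_profile_scale_diff_le:
  fixes \<delta> \<sigma> \<sigma>' u :: real
  assumes "\<delta> > 0" "\<delta> \<le> \<sigma>" "\<sigma> \<le> \<sigma>'"
  shows "\<bar>exp (-(u\<^sup>2) / (2*\<sigma>\<^sup>2)) - exp (-(u\<^sup>2) / (2*\<sigma>'\<^sup>2))\<bar> \<le> (\<sigma> + \<sigma>') * (\<sigma>' - \<sigma>) / \<delta>\<^sup>2"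
proof -
  define a where "a = u\<^sup>2 / (2*\<sigma>'\<^sup>2)"
  define b where "b = u\<^sup>2 / (2*\<sigma>\<^sup>2)"
  have pos: "\<sigma> > 0" "\<sigma>' > 0" using assms by auto
  have ab: "0 \<le> a" "a \<le> b"
    unfolding a_def b_def using assms pos by (auto intro!: divide_left_mono mult_pos_pos power_mono)
  have ba: "b - a = a * ((\<sigma>' + \<sigma>) * (\<sigma>' - \<sigma>) / \<sigma>\<^sup>2)"
    using pos by (simp add: a_def b_def field_simps power2_eq_square)
  have "\<bar>exp (-a) - exp (-b)\<bar> \<le> (b - a) * exp (-a)" by (rule exp_neg_diff_le[OF ab])
  also have "\<dots> = (a * exp (-a)) * ((\<sigma>' + \<sigma>) * (\<sigma>' - \<sigma>) / \<sigma>\<^sup>2)"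
    by (simp add: ba)
  also have "\<dots> \<le> 1 * ((\<sigma>' + \<sigma>) * (\<sigma>' - \<sigma>) / \<sigma>\<^sup>2)"
    using assms pos by (intro mult_right_mono mult_exp_neg_le_one) auto
  also have "\<dots> = (\<sigma> + \<sigma>') * (\<sigma>' - \<sigma>) / \<sigma>\<^sup>2" by (simp add: add.commute)
  also have "\<dots> \<le> (\<sigma> + \<sigma>') * (\<sigma>' - \<sigma>) / \<delta>\<^sup>2"
    using assms by (intro divide_left_mono power_mono) auto
  finally show ?thesis by (simp add: a_def b_def abs_minus_commute)
qed

lemma gauss_kernel_diff_le:
  fixes x x' y :: "'a::real_normed_vector"
  assumes "\<delta> > 0" "\<delta> \<le> \<sigma>" "\<delta> \<le> \<sigma>'"
  shows "\<bar>gauss_kernel \<sigma> x y - gauss_kernel \<sigma>' x' y\<bar>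
           \<le> (\<sigma> + \<sigma>') * \<bar>\<sigma> - \<sigma>'\<bar> / \<delta>\<^sup>2 + norm (x - x') / \<delta> + (norm (x - x'))\<^sup>2 / \<delta>\<^sup>2"
proof -
  define h where "h = norm (x - x')"
  have "\<bar>gauss_kernel \<sigma> x y - gauss_kernel \<sigma>' x y\<bar> \<le> (\<sigma> + \<sigma>') * \<bar>\<sigma> - \<sigma>'\<bar> / \<delta>\<^sup>2"
    using gauss_profile_scale_diff_le[OF assms(1,2), of \<sigma>' "norm (x - y)"]
      gauss_profile_scale_diff_le[OF assms(1,3), of \<sigma> "norm (x - y)"]
    by (cases "\<sigma> \<le> \<sigma>'") (auto simp: gauss_kernel_def abs_minus_commute add.commute)
  moreover have "\<bar>gauss_kernel \<sigma>' x y - gauss_kernel \<sigma>' x' y\<bar> \<le> h / \<sigma>' + h\<^sup>2 / (2*\<sigma>'\<^sup>2)"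
  proof -
    have "norm (x' - y) \<le> norm (x - y) + h" "norm (x - y) \<le> norm (x' - y) + h"
      unfolding h_def using norm_triangle_ineq[of "x' - x" "x - y"] norm_triangle_ineq[of "x - x'" "x' - y"]
      by (simp_all add: norm_minus_commute)
    then show ?thesis
      using gauss_profile_shift_diff_le[of \<sigma>' "norm (x - y)" "norm (x' - y)" h]
        gauss_profile_shift_diff_le[of \<sigma>' "norm (x' - y)" "norm (x - y)" h] assms
      by (cases "norm (x - y) \<le> norm (x' - y)") (auto simp: gauss_kernel_def abs_minus_commute)
  qed
  moreover have "h / \<sigma>' + h\<^sup>2 / (2*\<sigma>'\<^sup>2) \<le> h / \<delta> + h\<^sup>2 / \<delta>\<^sup>2"
  proof -
    have "\<delta>\<^sup>2 \<le> \<sigma>'\<^sup>2" using assms by (intro power_mono) auto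
    then have "\<delta>\<^sup>2 \<le> 2*\<sigma>'\<^sup>2" using zero_le_power2[of \<sigma>'] by linarith
    then show ?thesis using assms by (intro add_mono divide_left_mono) (auto simp: h_def)
  qed
  ultimately show ?thesis unfolding h_def by linarith
qed

lemma gauss_kernel_ge_product:
  fixes x y :: "'a::real_normed_vector"
  assumes "\<delta> > 0" "\<delta> \<le> \<sigma>"
  shows "exp (-((norm x)\<^sup>2) / \<delta>\<^sup>2) * exp (-((norm y)\<^sup>2) / \<delta>\<^sup>2) \<le> gauss_kernel \<sigma> x y"
proof -
  have "(norm (x - y))\<^sup>2 \<le> (norm x + norm y)\<^sup>2"
    using norm_triangle_ineq4[of x y] by (intro power_mono) auto
  also have "\<dots> \<le> 2 * ((norm x)\<^sup>2 + (norm y)\<^sup>2)"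
    using zero_le_power2[of "norm x - norm y"] by (simp add: power2_sum power2_diff)
  finally have "(norm (x - y))\<^sup>2 / (2*\<sigma>\<^sup>2) \<le> 2 * ((norm x)\<^sup>2 + (norm y)\<^sup>2) / (2*\<sigma>\<^sup>2)"
    by (intro divide_right_mono) auto
  also have "\<dots> = ((norm x)\<^sup>2 + (norm y)\<^sup>2) / \<sigma>\<^sup>2" using assms by (simp add: field_simps)
  also have "\<dots> \<le> ((norm x)\<^sup>2 + (norm y)\<^sup>2) / \<delta>\<^sup>2"
    using assms by (intro divide_left_mono power_mono) auto
  finally show ?thesis by (simp add: gauss_kernel_def add_divide_distrib flip: exp_add)
qed

definition emp_kernel_mean :: "real \<Rightarrow> (nat \<Rightarrow> 'a::real_normed_vector) \<Rightarrow> nat \<Rightarrow> 'a \<Rightarrow> real" where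
  "emp_kernel_mean \<sigma> Y n x = (1 / real n) * (\<Sum>j=1..n. gauss_kernel \<sigma> x (Y j))"

definition kernel_mean :: "'a::real_normed_vector measure \<Rightarrow> real \<Rightarrow> 'a \<Rightarrow> real" where
  "kernel_mean \<mu> \<sigma> x = integral\<^sup>L \<mu> (gauss_kernel \<sigma> x)"

lemma integrable_gauss_kernel:
  assumes "finite_measure \<mu>" "sets \<mu> = sets borel"
  shows "integrable \<mu> (gauss_kernel \<sigma> x)"
  using assms by (intro finite_measure.integrable_const_bound[where B=1])
    (auto simp: abs_of_pos[OF gauss_kernel_pos] gauss_kernel_le_one measurable_cong_sets[OF assms(2) refl])

lemma emp_kernel_mean_diff_le:
  assumes "n > 0" "\<And>y. \<bar>gauss_kernel \<sigma> x y - gauss_kernel \<sigma>' x' y\<bar> \<le> c"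
  shows "\<bar>emp_kernel_mean \<sigma> Y n x - emp_kernel_mean \<sigma>' Y n x'\<bar> \<le> c"
proof -
  have "\<bar>(\<Sum>j=1..n. gauss_kernel \<sigma> x (Y j)) - (\<Sum>j=1..n. gauss_kernel \<sigma>' x' (Y j))\<bar>
        \<le> (\<Sum>j=1..n. \<bar>gauss_kernel \<sigma> x (Y j) - gauss_kernel \<sigma>' x' (Y j)\<bar>)"
    by (simp flip: sum_subtractf add: sum_abs)
  also have "\<dots> \<le> real n * c" using sum_bounded_above[of "{1..n}", OF assms(2)] by simp
  moreover have "emp_kernel_mean \<sigma> Y n x - emp_kernel_mean \<sigma>' Y n x'
      = ((\<Sum>j=1..n. gauss_kernel \<sigma> x (Y j)) - (\<Sum>j=1..n. gauss_kernel \<sigma>' x' (Y j))) / real n"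
    by (simp add: emp_kernel_mean_def diff_divide_distrib)
  ultimately show ?thesis
    using assms(1) by (simp add: abs_divide divide_le_eq mult.commute)
qed

lemma kernel_mean_diff_le:
  assumes "prob_space \<mu>" "sets \<mu> = sets borel"
    and "\<And>y. \<bar>gauss_kernel \<sigma> x y - gauss_kernel \<sigma>' x' y\<bar> \<le> c"
  shows "\<bar>kernel_mean \<mu> \<sigma> x - kernel_mean \<mu> \<sigma>' x'\<bar> \<le> c"
proof -
  interpret prob_space \<mu> by fact
  have int: "integrable \<mu> (gauss_kernel s z)" for s z
    using assms(2) by (intro integrable_gauss_kernel) unfold_locales
  have "\<bar>kernel_mean \<mu> \<sigma> x - kernel_mean \<mu> \<sigma>' x'\<bar>
        = \<bar>\<integral>y. gauss_kernel \<sigma> x y - gauss_kernel \<sigma>' x' y \<partial>\<mu>\<bar>"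
    using int by (simp add: kernel_mean_def)
  also have "\<dots> \<le> (\<integral>y. \<bar>gauss_kernel \<sigma> x y - gauss_kernel \<sigma>' x' y\<bar> \<partial>\<mu>)"
    using integral_norm_bound[of \<mu> "\<lambda>y. gauss_kernel \<sigma> x y - gauss_kernel \<sigma>' x' y"] by simp
  also have "\<dots> \<le> (\<integral>y. c \<partial>\<mu>)"
    using int assms(3) by (intro integral_mono) auto
  finally show ?thesis by (simp add: prob_space)
qed

lemma kernel_mean_ge:
  assumes "prob_space \<mu>" "sets \<mu> = sets borel" "\<delta> > 0" "\<delta> \<le> \<sigma>"
  shows "exp (-((norm x)\<^sup>2) / \<delta>\<^sup>2) * (\<integral>y. exp (-((norm y)\<^sup>2) / \<delta>\<^sup>2) \<partial>\<mu>) \<le> kernel_mean \<mu> \<sigma> x"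
proof -
  interpret prob_space \<mu> by fact
  have "integrable \<mu> (\<lambda>y. exp (-((norm y)\<^sup>2) / \<delta>\<^sup>2))"
    using assms(2) by (intro integrable_const_bound[where B=1])
      (auto simp: measurable_cong_sets[OF assms(2) refl])
  then show ?thesis
    unfolding kernel_mean_def
    using assms gauss_kernel_ge_product integrable_gauss_kernel[OF finite_measure_axioms assms(2)]
    by (subst integral_mult_right_zero[symmetric]) (intro integral_mono; simp)
qed

lemma integral_exp_neg_norm_square_pos:
  fixes \<mu> :: "'a::real_normed_vector measure"
  assumes "prob_space \<mu>" "sets \<mu> = sets borel"
  shows "0 < (\<integral>y. exp (-((norm y)\<^sup>2) / \<delta>\<^sup>2) \<partial>\<mu>)"
proof -
  interpret prob_space \<mu> by fact
  have "integrable \<mu> (\<lambda>y. exp (-((norm y)\<^sup>2) / \<delta>\<^sup>2))"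
    using assms(2) by (intro integrable_const_bound[where B=1])
      (auto simp: measurable_cong_sets[OF assms(2) refl])
  then show ?thesis
    using integral_less_AE_space[OF integrable_zero] by (simp add: emeasure_space_1)
qed

section \<open>Discretisation of scales and centres\<close>

definition cube_grid :: "nat \<Rightarrow> (real ^ 'd) set" where
  "cube_grid n = (\<lambda>k. \<chi> i. real_of_int (k i) / real n) ` (PiE UNIV (\<lambda>_. {-(int n)\<^sup>2..(int n)\<^sup>2}))"

definition scale_grid :: "real \<Rightarrow> nat \<Rightarrow> real set" where
  "scale_grid \<delta> n = (\<lambda>k. \<delta> + real k / (real n)\<^sup>2) ` {0..n^3}"

lemma finite_cube_grid: "finite (cube_grid n)"
  unfolding cube_grid_def by (intro finite_imageI finite_PiE) auto

lemma finite_scale_grid: "finite (scale_grid \<delta> n)"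
  unfolding scale_grid_def by simp

lemma card_cube_grid_le: "card (cube_grid n :: (real ^ 'd) set) \<le> (2 * n\<^sup>2 + 1) ^ CARD('d)"
proof -
  have "card (cube_grid n :: (real ^ 'd) set) \<le> card (PiE (UNIV :: 'd set) (\<lambda>_. {-(int n)\<^sup>2..(int n)\<^sup>2}))"
    unfolding cube_grid_def by (intro card_image_le finite_PiE) auto
  also have "\<dots> = (2 * n\<^sup>2 + 1) ^ CARD('d)"
    by (simp add: card_PiE nat_add_distrib nat_mult_distrib flip: of_nat_power)
  finally show ?thesis .
qed

lemma card_scale_grid_le: "card (scale_grid \<delta> n) \<le> n^3 + 1"
  using card_image_le[of "{0..n^3}" "\<lambda>k. \<delta> + real k / (real n)\<^sup>2"] by (simp add: scale_grid_def)

lemma card_grid_le: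
  assumes "n \<ge> 3"
  shows "card (scale_grid \<delta> n \<times> (cube_grid n :: (real ^ 'd) set)) \<le> n ^ (3 * CARD('d) + 4)"
proof -
  have "1 \<le> n\<^sup>2" "1 \<le> n^3" using assms by (simp_all add: one_le_power)
  moreover have "3 * n\<^sup>2 \<le> n * n\<^sup>2" "3 * n^3 \<le> n * n^3"
    using assms by (simp_all add: mult_right_mono)
  ultimately have "2 * n\<^sup>2 + 1 \<le> n^3" "n^3 + 1 \<le> n^4"
    by (simp_all add: power_Suc[symmetric] numeral_eq_Suc del: power_Suc)
  have "card (scale_grid \<delta> n \<times> (cube_grid n :: (real ^ 'd) set))
        = card (scale_grid \<delta> n) * card (cube_grid n :: (real ^ 'd) set)"
    by (rule card_cartesian_product)
  also have "\<dots> \<le> (n^3 + 1) * (2 * n\<^sup>2 + 1) ^ CARD('d)"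
    by (intro mult_mono card_scale_grid_le card_cube_grid_le) auto
  also have "\<dots> \<le> n^4 * (n^3) ^ CARD('d)"
    using \<open>2 * n\<^sup>2 + 1 \<le> n^3\<close> \<open>n^3 + 1 \<le> n^4\<close> by (intro mult_mono power_mono) auto
  also have "\<dots> = n ^ (3 * CARD('d) + 4)" by (simp add: power_mult power_add)
  finally show ?thesis .
qed

lemma cube_grid_cover:
  fixes x :: "real ^ 'd"
  assumes "n \<ge> 1" "norm x \<le> real n"
  shows "\<exists>x'\<in>cube_grid n. norm (x - x') \<le> real CARD('d) / real n"
proof -
  define k where "k i = \<lfloor>real n * x$i\<rfloor>" for i
  define x' where "x' = (\<chi> i. real_of_int (k i) / real n)"
  have "k i \<in> {-(int n)\<^sup>2..(int n)\<^sup>2}" for i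
  proof -
    have "\<bar>x$i\<bar> \<le> real n" using component_le_norm_cart[of x i] assms by simp
    then have "\<bar>real n * x$i\<bar> \<le> real n * real n" by (simp add: abs_mult mult_left_mono)
    then show ?thesis unfolding k_def by (simp add: abs_le_iff le_floor_iff floor_le_iff power2_eq_square)
  qed
  then have "x' \<in> cube_grid n" unfolding cube_grid_def x'_def by auto
  moreover have "\<bar>(x - x')$i\<bar> \<le> 1 / real n" for i
  proof -
    have "\<bar>real n * x$i - real_of_int (k i)\<bar> \<le> 1" unfolding k_def by linarith
    moreover have "(x - x')$i = (real n * x$i - real_of_int (k i)) / real n"
      unfolding x'_def using assms by (simp add: field_simps)
    ultimately show ?thesis using assms by (simp add: abs_divide divide_right_mono)
  qed
  then have "norm (x - x') \<le> real CARD('d) / real n"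
    using norm_le_l1_cart[of "x - x'"] sum_bounded_above[of UNIV "\<lambda>i. \<bar>(x - x')$i\<bar>"] by force
  ultimately show ?thesis by blast
qed

lemma scale_grid_cover:
  assumes "n \<ge> 1" "\<delta> \<le> \<sigma>" "\<sigma> \<le> \<delta> + real n"
  shows "\<exists>\<sigma>'\<in>scale_grid \<delta> n. \<delta> \<le> \<sigma>' \<and> \<sigma>' \<le> \<sigma> \<and> \<sigma> - \<sigma>' \<le> 1 / (real n)\<^sup>2"
proof -
  define y where "y = (\<sigma> - \<delta>) * (real n)\<^sup>2"
  define k where "k = nat \<lfloor>y\<rfloor>"
  have y: "0 \<le> y" "y \<le> real n ^ 3"
    unfolding y_def using assms by (auto simp: power3_eq_cube power2_eq_square intro!: mult_right_mono)
  then have k: "real k \<le> y" "y < real k + 1" unfolding k_def by linarith+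
  with y have "k \<le> n^3" by (metis of_nat_le_iff of_nat_power order_trans)
  define \<sigma>' where "\<sigma>' = \<delta> + real k / (real n)\<^sup>2"
  have "\<sigma>' \<in> scale_grid \<delta> n" unfolding scale_grid_def \<sigma>'_def using \<open>k \<le> n^3\<close> by auto
  moreover have "\<sigma> - \<sigma>' = (y - real k) / (real n)\<^sup>2"
    unfolding \<sigma>'_def y_def using assms by (simp add: field_simps)
  with k have "0 \<le> \<sigma> - \<sigma>'" "\<sigma> - \<sigma>' \<le> 1 / (real n)\<^sup>2"
    by (simp_all add: divide_right_mono)
  moreover have "\<delta> \<le> \<sigma>'" unfolding \<sigma>'_def by simp
  ultimately show ?thesis by auto
qed

section \<open>Error bound along a fixed sample\<close>

lemma emp_kernel_mean_error_le_grid: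
  fixes \<mu> :: "(real ^ 'd) measure" and Y :: "nat \<Rightarrow> real ^ 'd" and x :: "real ^ 'd"
  defines "d \<equiv> real CARD('d)"
  assumes \<mu>: "prob_space \<mu>" "sets \<mu> = sets borel"
    and \<delta>: "\<delta> > 0" "\<delta> \<le> \<sigma>" and "n \<ge> 1" "\<sigma> \<le> real n" "norm x \<le> real n"
    and grid: "\<forall>(\<sigma>', x')\<in>scale_grid \<delta> n \<times> cube_grid n.
                 \<bar>emp_kernel_mean \<sigma>' Y n x' - kernel_mean \<mu> \<sigma>' x'\<bar> \<le> e"
  shows "\<bar>emp_kernel_mean \<sigma> Y n x - kernel_mean \<mu> \<sigma> x\<bar>
           \<le> e + 2 * ((2 + d * \<delta> + d\<^sup>2) / \<delta>\<^sup>2) / real n"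
proof -
  define L where "L = ((2 + d * \<delta> + d\<^sup>2) / \<delta>\<^sup>2) / real n"
  obtain x' where x': "x' \<in> cube_grid n" "norm (x - x') \<le> d / real n"
    using cube_grid_cover[of n x] assms unfolding d_def by auto
  obtain \<sigma>' where \<sigma>': "\<sigma>' \<in> scale_grid \<delta> n" "\<delta> \<le> \<sigma>'" "\<sigma>' \<le> \<sigma>" "\<sigma> - \<sigma>' \<le> 1 / (real n)\<^sup>2"
    using scale_grid_cover[of n \<delta> \<sigma>] assms by auto
  have kernel: "\<bar>gauss_kernel \<sigma> x y - gauss_kernel \<sigma>' x' y\<bar> \<le> L" for y
  proof -
    have "(\<sigma> + \<sigma>') * \<bar>\<sigma> - \<sigma>'\<bar> \<le> (2 * real n) * (1 / (real n)\<^sup>2)"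
      using assms \<sigma>' by (intro mult_mono) auto
    then have scale: "(\<sigma> + \<sigma>') * \<bar>\<sigma> - \<sigma>'\<bar> \<le> 2 / real n"
      using assms by (simp add: power2_eq_square)
    have "(norm (x - x'))\<^sup>2 \<le> (d / real n)\<^sup>2" using x' by (intro power_mono) auto
    also have "\<dots> \<le> d\<^sup>2 / real n"
      using assms by (simp add: power_divide divide_left_mono power2_eq_square)
    finally have "(\<sigma> + \<sigma>') * \<bar>\<sigma> - \<sigma>'\<bar> / \<delta>\<^sup>2 + norm (x - x') / \<delta> + (norm (x - x'))\<^sup>2 / \<delta>\<^sup>2
        \<le> (2 / real n) / \<delta>\<^sup>2 + (d / real n) / \<delta> + (d\<^sup>2 / real n) / \<delta>\<^sup>2"
      using scale x' assms by (intro add_mono divide_right_mono) auto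
    also have "\<dots> = L" unfolding L_def using assms by (simp add: field_simps power2_eq_square)
    finally show ?thesis using gauss_kernel_diff_le[OF \<delta> \<sigma>'(2), where x=x and x'=x' and y=y] by linarith
  qed
  have "\<bar>emp_kernel_mean \<sigma> Y n x - emp_kernel_mean \<sigma>' Y n x'\<bar> \<le> L"
    using assms kernel by (intro emp_kernel_mean_diff_le) auto
  moreover have "\<bar>kernel_mean \<mu> \<sigma>' x' - kernel_mean \<mu> \<sigma> x\<bar> \<le> L"
    using kernel by (intro kernel_mean_diff_le[OF \<mu>]) (simp add: abs_minus_commute)
  moreover have "\<bar>emp_kernel_mean \<sigma>' Y n x' - kernel_mean \<mu> \<sigma>' x'\<bar> \<le> e"
    using grid x' \<sigma>' by auto
  ultimately show ?thesis unfolding L_def by linarith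
qed

lemma exp_neg_norm_square_ge:
  fixes x :: "'a::real_normed_vector"
  assumes "n \<ge> 1" "c\<^sub>1 > 0" "d \<ge> 0" "norm x \<le> sqrt d + sqrt (2 * ln (real n) / c\<^sub>1)"
  shows "exp (- 2 * d / \<delta>\<^sup>2) * real n powr (- (4 / (c\<^sub>1 * \<delta>\<^sup>2))) \<le> exp (-((norm x)\<^sup>2) / \<delta>\<^sup>2)"
proof -
  define t where "t = sqrt (2 * ln (real n) / c\<^sub>1)"
  have "(norm x)\<^sup>2 \<le> (sqrt d + t)\<^sup>2" using assms by (intro power_mono) (auto simp: t_def)
  also have "\<dots> \<le> 2 * (sqrt d)\<^sup>2 + 2 * t\<^sup>2"
    using zero_le_power2[of "sqrt d - t"] by (simp add: power2_sum power2_diff)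
  also have "\<dots> = 2 * d + 4 * ln (real n) / c\<^sub>1" using assms by (simp add: t_def)
  finally have "(norm x)\<^sup>2 / \<delta>\<^sup>2 \<le> (2 * d + 4 * ln (real n) / c\<^sub>1) / \<delta>\<^sup>2"
    by (intro divide_right_mono) auto
  then have "- 2 * d / \<delta>\<^sup>2 + (- (4 / (c\<^sub>1 * \<delta>\<^sup>2))) * ln (real n) \<le> -((norm x)\<^sup>2) / \<delta>\<^sup>2"
    by (simp add: add_divide_distrib)
  then show ?thesis using assms by (simp add: powr_def flip: exp_add)
qed

lemma kernel_mean_ge_powr:
  fixes \<mu> :: "'a::real_normed_vector measure"
  assumes \<mu>: "prob_space \<mu>" "sets \<mu> = sets borel" and \<delta>: "\<delta> > 0" "\<delta> \<le> \<sigma>"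
    and "n \<ge> 1" "c\<^sub>1 > 0" "d \<ge> 0" "norm x \<le> sqrt d + sqrt (2 * ln (real n) / c\<^sub>1)"
  shows "(\<integral>y. exp (-((norm y)\<^sup>2) / \<delta>\<^sup>2) \<partial>\<mu>) * exp (- 2 * d / \<delta>\<^sup>2) * real n powr (- (4 / (c\<^sub>1 * \<delta>\<^sup>2)))
           \<le> kernel_mean \<mu> \<sigma> x"
proof -
  have "(\<integral>y. exp (-((norm y)\<^sup>2) / \<delta>\<^sup>2) \<partial>\<mu>) * (exp (- 2 * d / \<delta>\<^sup>2) * real n powr (- (4 / (c\<^sub>1 * \<delta>\<^sup>2))))
        \<le> (\<integral>y. exp (-((norm y)\<^sup>2) / \<delta>\<^sup>2) \<partial>\<mu>) * exp (-((norm x)\<^sup>2) / \<delta>\<^sup>2)"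
    using assms integral_exp_neg_norm_square_pos[OF \<mu>, of \<delta>]
    by (intro mult_left_mono exp_neg_norm_square_ge) auto
  also have "\<dots> \<le> kernel_mean \<mu> \<sigma> x" using kernel_mean_ge[OF \<mu> \<delta>] by (simp add: mult.commute)
  finally show ?thesis by (simp add: mult.assoc)
qed

lemma eventually_all_norm_le_radius:
  fixes Y :: "nat \<Rightarrow> 'a::real_normed_vector"
  assumes "c\<^sub>1 > 0" "eventually (\<lambda>n. norm (Y n) \<le> sqrt d + sqrt (2 * ln (real n) / c\<^sub>1)) sequentially"
  shows "eventually (\<lambda>n. \<forall>i\<le>n. norm (Y i) \<le> sqrt d + sqrt (2 * ln (real n) / c\<^sub>1)) sequentially"
proof (rule eventually_all_le_mono[OF _ _ assms(2)])
  have "ln (real m) \<le> ln (real n)" if "m \<le> n" for m n :: nat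
    using that by (cases "m = 0"; cases "n = 0") auto
  then show "mono (\<lambda>n. sqrt d + sqrt (2 * ln (real n) / c\<^sub>1))"
    by (intro monoI add_left_mono real_sqrt_le_mono divide_right_mono) (use assms in auto)
  show "filterlim (\<lambda>n. sqrt d + sqrt (2 * ln (real n) / c\<^sub>1)) at_top sequentially"
    using assms by real_asymp
qed

lemma abs_ln_kernel_mean_error_le:
  fixes \<mu> :: "(real ^ 'd) measure" and Y :: "nat \<Rightarrow> real ^ 'd" and x :: "real ^ 'd"
    and \<delta> \<sigma> c\<^sub>1 e :: real and n :: nat
  defines "d \<equiv> real CARD('d)"
    and "b \<equiv> (\<integral>y. exp (-((norm y)\<^sup>2) / \<delta>\<^sup>2) \<partial>\<mu>) * exp (- 2 * real CARD('d) / \<delta>\<^sup>2)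
             * real n powr (- (4 / (c\<^sub>1 * \<delta>\<^sup>2)))"
  assumes \<mu>: "prob_space \<mu>" "sets \<mu> = sets borel" and \<delta>: "\<delta> > 0" "\<delta> \<le> \<sigma>"
    and "n \<ge> 1" "\<sigma> \<le> real n" "c\<^sub>1 > 0"
    and "norm x \<le> sqrt d + sqrt (2 * ln (real n) / c\<^sub>1)" "sqrt d + sqrt (2 * ln (real n) / c\<^sub>1) \<le> real n"
    and "\<forall>(\<sigma>', x')\<in>scale_grid \<delta> n \<times> cube_grid n.
           \<bar>emp_kernel_mean \<sigma>' Y n x' - kernel_mean \<mu> \<sigma>' x'\<bar> \<le> e"
    and "2 * ((2 + d * \<delta> + d\<^sup>2) / \<delta>\<^sup>2) / real n \<le> e" "4 * e \<le> b"
  shows "\<bar>ln (emp_kernel_mean \<sigma> Y n x) - ln (kernel_mean \<mu> \<sigma> x)\<bar> \<le> 4 * e / b"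
proof -
  have "\<bar>emp_kernel_mean \<sigma> Y n x - kernel_mean \<mu> \<sigma> x\<bar> \<le> e + 2 * ((2 + d * \<delta> + d\<^sup>2) / \<delta>\<^sup>2) / real n"
    unfolding d_def using assms(5-) by (intro emp_kernel_mean_error_le_grid[OF \<mu> \<delta>]) auto
  also have "\<dots> \<le> 2 * e" using assms by simp
  finally have err: "\<bar>emp_kernel_mean \<sigma> Y n x - kernel_mean \<mu> \<sigma> x\<bar> \<le> 2 * e" .
  have low: "b \<le> kernel_mean \<mu> \<sigma> x"
    unfolding b_def using assms(5-) by (intro kernel_mean_ge_powr[OF \<mu> \<delta>]) (auto simp: d_def)
  have "b > 0"
    unfolding b_def using integral_exp_neg_norm_square_pos[OF \<mu>, of \<delta>] assms by simp
  then show ?thesis using abs_ln_diff_le_of_close[OF _ low err] assms by simp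
qed

lemma log_kernel_mean_error_rate:
  fixes \<mu> :: "(real ^ 'd) measure" and Y :: "nat \<Rightarrow> real ^ 'd" and \<delta> c\<^sub>1 a :: real
  defines "d \<equiv> real CARD('d)" and "\<alpha> \<equiv> 4 / (c\<^sub>1 * \<delta>\<^sup>2)"
  assumes \<mu>: "prob_space \<mu>" "sets \<mu> = sets borel"
    and \<delta>: "\<delta> > 0" and c\<^sub>1: "c\<^sub>1 > 0" "c\<^sub>1 * \<delta>\<^sup>2 > 8" and a: "a > 0"
    and norm: "eventually (\<lambda>n. norm (Y n) \<le> sqrt d + sqrt (2 * ln (real n) / c\<^sub>1)) sequentially"
    and grid: "eventually (\<lambda>n. \<forall>(\<sigma>, x)\<in>scale_grid \<delta> n \<times> cube_grid n.
                 \<bar>emp_kernel_mean \<sigma> Y n x - kernel_mean \<mu> \<sigma> x\<bar> \<le> sqrt (a * ln (real n) / real n))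
               sequentially"
  shows "\<exists>K. eventually (\<lambda>n. \<forall>\<sigma>\<in>{\<delta>..sqrt (real n)}. \<forall>i\<in>{1..n}.
           \<bar>ln (emp_kernel_mean \<sigma> Y n (Y i)) - ln (kernel_mean \<mu> \<sigma> (Y i))\<bar>
             \<le> K * (real n powr (\<alpha> - 1/2) * sqrt (ln (real n)))) sequentially"
proof -
  define r where "r n = sqrt d + sqrt (2 * ln (real n) / c\<^sub>1)" for n :: nat
  define s where "s n = sqrt (a * ln (real n) / real n)" for n :: nat
  define c where "c = (\<integral>y. exp (-((norm y)\<^sup>2) / \<delta>\<^sup>2) \<partial>\<mu>) * exp (- 2 * d / \<delta>\<^sup>2)"
  have c: "c > 0" unfolding c_def using integral_exp_neg_norm_square_pos[OF \<mu>] by simp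
  have \<alpha>: "\<alpha> < 1/2" unfolding \<alpha>_def using \<delta> c\<^sub>1 by (simp add: field_simps)
  have "eventually (\<lambda>n. r n \<le> real n) sequentially" unfolding r_def using c\<^sub>1 by real_asymp
  moreover have "eventually (\<lambda>n. 2 * ((2 + d * \<delta> + d\<^sup>2) / \<delta>\<^sup>2) / real n \<le> s n) sequentially"
    unfolding s_def using a by real_asymp
  moreover have "eventually (\<lambda>n. 4 * s n \<le> c * real n powr (-\<alpha>)) sequentially"
    unfolding s_def using a c \<alpha> by real_asymp
  moreover have "eventually (\<lambda>n. sqrt (real n) \<le> real n) sequentially" by real_asymp
  moreover have "eventually (\<lambda>n. 1 \<le> n) sequentially" by simp
  moreover have "eventually (\<lambda>n. \<forall>i\<le>n. norm (Y i) \<le> r n) sequentially"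
    unfolding r_def by (rule eventually_all_norm_le_radius[OF c\<^sub>1(1) norm])
  ultimately have "eventually (\<lambda>n. \<forall>\<sigma>\<in>{\<delta>..sqrt (real n)}. \<forall>i\<in>{1..n}.
           \<bar>ln (emp_kernel_mean \<sigma> Y n (Y i)) - ln (kernel_mean \<mu> \<sigma> (Y i))\<bar>
             \<le> 4 * s n / (c * real n powr (-\<alpha>))) sequentially"
    using grid
  proof eventually_elim
    case (elim n)
    show ?case
    proof (intro ballI)
      fix \<sigma> i assume "\<sigma> \<in> {\<delta>..sqrt (real n)}" "i \<in> {1..n}"
      then show "\<bar>ln (emp_kernel_mean \<sigma> Y n (Y i)) - ln (kernel_mean \<mu> \<sigma> (Y i))\<bar>
          \<le> 4 * s n / (c * real n powr (-\<alpha>))"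
        using elim c\<^sub>1(1) unfolding r_def s_def c_def \<alpha>_def d_def
        by (intro abs_ln_kernel_mean_error_le[OF \<mu> \<delta>(1)]) auto
    qed
  qed
  moreover have "4 * s n / (c * real n powr (-\<alpha>))
                 = (4 * sqrt a / c) * (real n powr (\<alpha> - 1/2) * sqrt (ln (real n)))" if "n \<ge> 1" for n
  proof -
    have "4 * s n / (c * real n powr (-\<alpha>)) = (4 / c) * (s n / real n powr (-\<alpha>))" by simp
    also have "s n / real n powr (-\<alpha>) = sqrt a * (real n powr (\<alpha> - 1/2) * sqrt (ln (real n)))"
      unfolding s_def using that by (intro sqrt_ln_div_powr_neg) simp
    finally show ?thesis by simp
  qed
  ultimately show ?thesis
    by (intro exI[of _ "4 * sqrt a / c"]) (auto elim!: eventually_mono)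
qed

section \<open>Independent samples\<close>

lemma (in prob_space) AE_eventually_notin_if_prob_le_inverse_square:
  assumes "\<And>n. A n \<in> events" "eventually (\<lambda>n. prob (A n) \<le> C / (real n)\<^sup>2) sequentially"
  shows "AE \<omega> in M. eventually (\<lambda>n. \<omega> \<notin> A n) sequentially"
proof -
  have "eventually (\<lambda>n. norm (prob (A n)) \<le> C * inverse ((real n)\<^sup>2)) sequentially"
    using assms(2) by eventually_elim (simp add: divide_inverse)
  moreover have "summable (\<lambda>n. C * inverse ((real n)\<^sup>2))"
    by (intro summable_mult inverse_power_summable) auto
  ultimately have "summable (\<lambda>n. prob (A n))" by (rule summable_comparison_test_ev)
  then have "AE \<omega> in M. eventually (\<lambda>n. \<omega> \<in> space M - A n) sequentially"
    using assms(1) by (intro borel_cantelli_AE1) (auto simp: emeasure_eq_measure)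
  then show ?thesis by (auto elim!: eventually_mono)
qed

locale iid_sample = prob_space M for M :: "'a measure" +
  fixes X :: "nat \<Rightarrow> 'a \<Rightarrow> 'b::real_normed_vector" and \<mu> :: "'b measure"
  assumes measurable_X [measurable]: "\<And>i. X i \<in> borel_measurable M"
    and indep_X: "indep_vars (\<lambda>_. borel) X UNIV"
    and distr_X: "\<And>i. distr M borel (X i) = \<mu>"
begin

lemma prob_space_law: "prob_space \<mu>"
  using prob_space_distr[OF measurable_X[of 0]] distr_X[of 0] by simp

lemma sets_law: "sets \<mu> = sets borel"
  using distr_X[of 0] by (metis sets_distr)

lemma prob_vimage_X: "A \<in> sets borel \<Longrightarrow> prob (X n -` A \<inter> space M) = measure \<mu> A"
  using measure_distr[OF measurable_X, of A n] by (simp add: distr_X)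

lemma hoeffding_emp_kernel_mean:
  assumes "n > 0" "\<epsilon> \<ge> 0"
  shows "prob {\<omega>\<in>space M. \<epsilon> \<le> \<bar>emp_kernel_mean \<sigma> (\<lambda>j. X j \<omega>) n x - kernel_mean \<mu> \<sigma> x\<bar>}
           \<le> 2 * exp (-2 * real n * \<epsilon>\<^sup>2)"
proof -
  define Z where "Z = (\<lambda>j \<omega>. gauss_kernel \<sigma> x (X j \<omega>))"
  have distr_Z: "distr M borel (Z j) = distr \<mu> borel (gauss_kernel \<sigma> x)" for j
    using distr_distr[of "gauss_kernel \<sigma> x" borel borel "X j" M] by (simp add: Z_def comp_def distr_X)
  have mean_Z: "expectation (Z 1) = kernel_mean \<mu> \<sigma> x"
    using integral_distr[of "X 1" M borel "gauss_kernel \<sigma> x"] by (simp add: Z_def kernel_mean_def distr_X)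
  interpret Hoeffding_ineq_iid M "{1..n}" Z "Z 1" 0 1 "expectation (Z 1)"
  proof unfold_locales
    show "indep_vars (\<lambda>_. borel) Z {1..n}"
      using indep_vars_subset[OF indep_vars_compose2[OF indep_X, of "\<lambda>_. gauss_kernel \<sigma> x" "\<lambda>_. borel"]]
      unfolding Z_def by auto
    show "distr M borel (Z i) = distr M borel (Z 1)" for i using distr_Z by simp
    show "AE \<omega> in M. Z 1 \<omega> \<in> {0..1}" by (auto simp: Z_def gauss_kernel_le_one less_imp_le[OF gauss_kernel_pos])
  qed (auto simp: Z_def)
  have "prob {\<omega>\<in>space M. \<epsilon> \<le> \<bar>(\<Sum>j\<in>{1..n}. Z j \<omega>) / real (card {1..n}) - expectation (Z 1)\<bar>}
          \<le> 2 * exp (-2 * real (card {1..n}) * \<epsilon>\<^sup>2 / (1 - 0)\<^sup>2)"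
    using assms by (intro Hoeffding_ineq_abs_ge') auto
  then show ?thesis unfolding mean_Z by (simp add: Z_def emp_kernel_mean_def)
qed

lemma AE_eventually_emp_kernel_mean_uniform:
  assumes "\<And>n. finite (P n)" "eventually (\<lambda>n. card (P n) \<le> n ^ k) sequentially" "k \<ge> 2"
  shows "AE \<omega> in M. eventually (\<lambda>n. \<forall>(\<sigma>, x)\<in>P n.
           \<bar>emp_kernel_mean \<sigma> (\<lambda>j. X j \<omega>) n x - kernel_mean \<mu> \<sigma> x\<bar> \<le> sqrt (real k * ln (real n) / real n))
         sequentially"
proof -
  define s where "s n = sqrt (real k * ln (real n) / real n)" for n :: nat
  define B where "B n \<sigma> x = {\<omega>\<in>space M. s n \<le> \<bar>emp_kernel_mean \<sigma> (\<lambda>j. X j \<omega>) n x - kernel_mean \<mu> \<sigma> x\<bar>}"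
    for n \<sigma> x
  define A where "A n = (\<Union>p\<in>P n. B n (fst p) (snd p))" for n
  have B: "B n \<sigma> x \<in> events" for n \<sigma> x unfolding B_def emp_kernel_mean_def by measurable
  have bound: "prob (A n) \<le> 2 / (real n)\<^sup>2" if "card (P n) \<le> n ^ k" "n \<ge> 1" for n
  proof -
    have "2 * real n * (s n)\<^sup>2 = ln (real n ^ (2 * k))"
      using that by (simp add: s_def ln_realpow)
    then have tail: "2 * exp (-2 * real n * (s n)\<^sup>2) = 2 / real n ^ (2 * k)"
      using that by (simp add: exp_minus inverse_eq_divide)
    have "prob (A n) \<le> (\<Sum>p\<in>P n. prob (B n (fst p) (snd p)))"
      unfolding A_def using assms(1) B by (intro finite_measure_subadditive_finite) auto
    also have "\<dots> \<le> real (card (P n)) * (2 / real n ^ (2 * k))"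
    proof (intro sum_bounded_above)
      fix p
      have "s n \<ge> 0" unfolding s_def using that by simp
      then show "prob (B n (fst p) (snd p)) \<le> 2 / real n ^ (2 * k)"
        unfolding B_def tail[symmetric] using that by (intro hoeffding_emp_kernel_mean) auto
    qed
    also have "\<dots> \<le> real n ^ k * (2 / real n ^ (2 * k))"
      using that by (intro mult_right_mono) (auto simp flip: of_nat_power)
    also have "\<dots> = 2 / real n ^ k" using that by (simp add: mult_2 power_add)
    also have "\<dots> \<le> 2 / (real n)\<^sup>2"
      using that assms(3) by (intro divide_left_mono power_increasing) auto
    finally show ?thesis .
  qed
  have "eventually (\<lambda>n. prob (A n) \<le> 2 / (real n)\<^sup>2) sequentially"
    using assms(2) eventually_ge_at_top[of 1] by eventually_elim (rule bound)
  moreover have "A n \<in> events" for n unfolding A_def using assms(1) B by auto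
  ultimately have "AE \<omega> in M. eventually (\<lambda>n. \<omega> \<notin> A n) sequentially"
    by (intro AE_eventually_notin_if_prob_le_inverse_square)
  then show ?thesis
    by (auto elim!: eventually_mono simp: A_def B_def s_def not_le intro: less_imp_le)
qed

lemma AE_eventually_norm_le:
  assumes "c\<^sub>1 > 0" "\<forall>t\<ge>0. measure \<mu> {x\<in>space \<mu>. norm x \<ge> r + t} \<le> C * exp (- c\<^sub>1 * t^2)"
  shows "AE \<omega> in M. eventually (\<lambda>n. norm (X n \<omega>) \<le> r + sqrt (2 * ln (real n) / c\<^sub>1)) sequentially"
proof -
  define t where "t n = sqrt (2 * ln (real n) / c\<^sub>1)" for n :: nat
  define A where "A n = X n -` {x. r + t n \<le> norm x} \<inter> space M" for n
  have bound: "prob (A n) \<le> C / (real n)\<^sup>2" if "n \<ge> 1" for n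
  proof -
    have "0 \<le> t n" unfolding t_def using assms(1) that by simp
    have "prob (A n) = measure \<mu> {x\<in>space \<mu>. r + t n \<le> norm x}"
      unfolding A_def using sets_law by (subst prob_vimage_X) (auto simp: sets_eq_imp_space_eq)
    also have "\<dots> \<le> C * exp (- c\<^sub>1 * (t n)\<^sup>2)"
      using assms(2) \<open>0 \<le> t n\<close> by blast
    also have "exp (- c\<^sub>1 * (t n)\<^sup>2) = exp (- ln ((real n)\<^sup>2))"
      using assms(1) that by (simp add: t_def ln_realpow)
    also have "C * \<dots> = C / (real n)\<^sup>2"
      using that by (simp add: exp_minus inverse_eq_divide)
    finally show ?thesis .
  qed
  have "eventually (\<lambda>n. prob (A n) \<le> C / (real n)\<^sup>2) sequentially"
    using eventually_ge_at_top[of 1] by eventually_elim (rule bound)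
  moreover have "A n \<in> events" for n unfolding A_def by measurable
  ultimately have "AE \<omega> in M. eventually (\<lambda>n. \<omega> \<notin> A n) sequentially"
    by (intro AE_eventually_notin_if_prob_le_inverse_square)
  then show ?thesis by (auto elim!: eventually_mono simp: A_def t_def not_le intro: less_imp_le)
qed

end

theorem lemma3p7:
  fixes \<nu> :: "real measure" and M :: "'a measure"
    and X :: "nat \<Rightarrow> 'a \<Rightarrow> real ^ 'd"
    and c\<^sub>1 C \<delta> :: real
  assumes nu_prob: "prob_space \<nu>" and nu_sets: "sets \<nu> = sets borel"
    and nu_sg: "subgaussian \<nu>"
    and c1_pos: "c\<^sub>1 > 0" and C_pos: "C > 0"
    and conc: "\<forall>t\<ge>0. measure (iid_vec_law \<nu> :: (real ^ 'd) measure)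
                  {x\<in>space (iid_vec_law \<nu>). norm x \<ge> sqrt (real CARD('d)) + t}
                \<le> C * exp (- c\<^sub>1 * t^2)"
    and M_prob: "prob_space M"
    and X_meas: "\<forall>i. X i \<in> borel_measurable M"
    and X_indep: "prob_space.indep_vars M (\<lambda>_. borel) X UNIV"
    and X_law: "\<forall>i. distr M borel (X i) = iid_vec_law \<nu>"
    and delta_pos: "\<delta> > 0" and delta_big: "c\<^sub>1 * \<delta>^2 > 8"
  shows "AE \<omega> in M. \<exists>K. \<forall>\<^sub>F n in sequentially.
           (\<forall>\<sigma>\<in>{\<delta>..sqrt (real n)}. \<forall>i\<in>{1..n}.
              \<bar>ln ((1 / real n) * (\<Sum>j=1..n. gauss_kernel \<sigma> (X i \<omega>) (X j \<omega>)))
               - ln (integral\<^sup>L (iid_vec_law \<nu>) (\<lambda>x'. gauss_kernel \<sigma> (X i \<omega>) x'))\<bar>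
              \<le> K * (real n powr (4 / (c\<^sub>1 * \<delta>^2) - 1/2) * sqrt (ln (real n))))"
proof -
  interpret iid_sample M X "iid_vec_law \<nu>"
    using M_prob X_meas X_indep X_law by (simp add: iid_sample_def iid_sample_axioms_def)
  have "AE \<omega> in M. eventually (\<lambda>n. norm (X n \<omega>) \<le> sqrt (real CARD('d)) + sqrt (2 * ln (real n) / c\<^sub>1))
          sequentially"
    by (rule AE_eventually_norm_le[OF c1_pos conc])
  moreover have "eventually (\<lambda>n. card (scale_grid \<delta> n \<times> (cube_grid n :: (real ^ 'd) set))
      \<le> n ^ (3 * CARD('d) + 4)) sequentially"
    using eventually_ge_at_top[of 3] by eventually_elim (rule card_grid_le)
  then have "AE \<omega> in M. eventually (\<lambda>n. \<forall>(\<sigma>, x)\<in>scale_grid \<delta> n \<times> cube_grid n.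
      \<bar>emp_kernel_mean \<sigma> (\<lambda>j. X j \<omega>) n x - kernel_mean (iid_vec_law \<nu>) \<sigma> x\<bar>
        \<le> sqrt (real (3 * CARD('d) + 4) * ln (real n) / real n)) sequentially"
    by (intro AE_eventually_emp_kernel_mean_uniform) (auto simp: finite_scale_grid finite_cube_grid)
  ultimately show ?thesis
  proof eventually_elim
    case (elim \<omega>)
    then have "\<exists>K. eventually (\<lambda>n. \<forall>\<sigma>\<in>{\<delta>..sqrt (real n)}. \<forall>i\<in>{1..n}.
        \<bar>ln (emp_kernel_mean \<sigma> (\<lambda>j. X j \<omega>) n (X i \<omega>)) - ln (kernel_mean (iid_vec_law \<nu>) \<sigma> (X i \<omega>))\<bar>
          \<le> K * (real n powr (4 / (c\<^sub>1 * \<delta>\<^sup>2) - 1/2) * sqrt (ln (real n)))) sequentially"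
      by (intro log_kernel_mean_error_rate[OF prob_space_law sets_law delta_pos c1_pos delta_big]) auto
    then show ?case by (simp add: emp_kernel_mean_def kernel_mean_def)
  qed
qed

end
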